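(* Consider the following optical-network model. Each link $k$ has a set $A_k\subseteq\mathbb{Z}$ of available units. Each trait $t$ has a resource $\mathrm{RI}(t)$, a nonempty integer interval, and for each link $k$ the set $t\oplus k$ of derived traits satisfies: every $t'\in t\oplus k$ has $\mathrm{RI}(t')$ a maximal integer interval contained in $\mathrm{RI}(t)\cap A_k$, and for every maximal integer interval $J\subseteq \mathrm{RI}(t)\cap A_k$ there is $t'\in t\oplus k$ with $\mathrm{RI}(t')=J$. Fix a link $k$ leaving a node $n$, and for a label $l=(t_1,t_2)$ whose both routes end at $n$ let $l\oplus e=\{(t,t_2): t\in t_1\oplus k\}\cup\{(t,t_1): t\in t_2\oplus k\}$ (the link may be appended to either route; afterwards the routes end at different nodes). Let $\mathrm{cost}$ be a real-valued function on labels such that for any labels $l_i,l_j$: if $\mathrm{cost}(l_i)\le\mathrm{cost}(l_j)$ then $\mathrm{cost}(l')\le\mathrm{cost}(l)$ for all $l'\in l_i\oplus e$ and all $l\in l_j\oplus e$. Let $l_i=(t_i,t'_i)$, $l_j=(t_j,t'_j)$ be labels whose routes all end at $n$. If $l_i\preceq'_{=} l_j$, then for every $l\in l_j\oplus e$ there exists $l'\in l_i\oplus e$ with $l'\preceq'_{\ne} l$.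
   Context: A trait describes a route in an optical network with its cost and the interval of contiguous units available along it; a label is a pair of traits of two link-disjoint routes. For labels $l_i=(t_i,t'_i)$, $l_j=(t_j,t'_j)$ with both routes ending at the same node: $\mathrm{RI}(l_i)\supseteq_n\mathrm{RI}(l_j)$ iff $\mathrm{RI}(t_i)\supseteq\mathrm{RI}(t_j)$ and $\mathrm{RI}(t'_i)\supseteq\mathrm{RI}(t'_j)$; $\mathrm{RI}(l_i)\supseteq_x\mathrm{RI}(l_j)$ iff $\mathrm{RI}(t_i)\supseteq\mathrm{RI}(t'_j)$ and $\mathrm{RI}(t'_i)\supseteq\mathrm{RI}(t_j)$; $l_i\preceq'_= l_j$ iff $\mathrm{cost}(l_i)\le\mathrm{cost}(l_j)$ and ($\mathrm{RI}(l_i)\supseteq_n\mathrm{RI}(l_j)$ or $\mathrm{RI}(l_i)\supseteq_x\mathrm{RI}(l_j)$). For labels $(a,b),(c,d)$ with routes ending at different nodes: $(a,b)\preceq'_{\ne}(c,d)$ iff $\mathrm{cost}((a,b))\le\mathrm{cost}((c,d))$, $\mathrm{RI}(a)\supseteq\mathrm{RI}(c)$ and $\mathrm{RI}(b)\supseteq\mathrm{RI}(d)$. *)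

theory Defs
  imports Complex_Main
begin

definition int_interval :: "int set \<Rightarrow> bool" where
  "int_interval S \<longleftrightarrow> (\<exists>a b. a \<le> b \<and> S = {a..b})"

definition max_int_interval :: "int set \<Rightarrow> int set \<Rightarrow> bool" where
  "max_int_interval J S \<longleftrightarrow> int_interval J \<and> J \<subseteq> S \<and>
     (\<forall>J'. int_interval J' \<and> J \<subseteq> J' \<and> J' \<subseteq> S \<longrightarrow> J' = J)"

definition label_ext :: "('t \<Rightarrow> 'k \<Rightarrow> 't set) \<Rightarrow> 'k \<Rightarrow> 't \<times> 't \<Rightarrow> ('t \<times> 't) set" where
  "label_ext ext k l = {(t, snd l) | t. t \<in> ext (fst l) k} \<union> {(t, fst l) | t. t \<in> ext (snd l) k}"

text \<open>Relation on labels whose routes all end at the same node.\<close>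
definition prec_eq :: "('t \<Rightarrow> int set) \<Rightarrow> ('t \<times> 't \<Rightarrow> real) \<Rightarrow> 't \<times> 't \<Rightarrow> 't \<times> 't \<Rightarrow> bool" where
  "prec_eq RI cost li lj \<longleftrightarrow> cost li \<le> cost lj \<and>
     ((RI (fst lj) \<subseteq> RI (fst li) \<and> RI (snd lj) \<subseteq> RI (snd li)) \<or>
      (RI (snd lj) \<subseteq> RI (fst li) \<and> RI (fst lj) \<subseteq> RI (snd li)))"

text \<open>Relation on labels whose routes end at different nodes.\<close>
definition prec_ne :: "('t \<Rightarrow> int set) \<Rightarrow> ('t \<times> 't \<Rightarrow> real) \<Rightarrow> 't \<times> 't \<Rightarrow> 't \<times> 't \<Rightarrow> bool" where
  "prec_ne RI cost l1 l2 \<longleftrightarrow> cost l1 \<le> cost l2 \<and>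
     RI (fst l2) \<subseteq> RI (fst l1) \<and> RI (snd l2) \<subseteq> RI (snd l1)"

end

theory Submission
  imports Defs
begin

text \<open>Each derived trait occupies a maximal block of free units inside its parent's interval.
  If a parent's interval contains another's, each block of the smaller one lies in some block of
  the larger one, so every extension of the dominated label is covered, on both routes, by an
  extension of the dominating label. In the crossed case of the dominance relation one swaps the
  routes of the dominating label, which does not change its set of extensions. The cost part is
  exactly the monotonicity assumption on the cost.\<close>

lemma max_int_interval_exists:
  assumes "finite S" "int_interval I" "I \<subseteq> S"
  obtains J where "max_int_interval J S" "I \<subseteq> J"
proof -
  let ?C = "{J. int_interval J \<and> J \<subseteq> S}"
  have "finite ?C"
    by (rule finite_subset[of _ "Pow S"]) (use assms(1) in auto)
  moreover have "I \<in> ?C"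
    using assms(2,3) by simp
  ultimately obtain J where "J \<in> ?C" "I \<subseteq> J" "\<forall>J'\<in>?C. J \<subseteq> J' \<longrightarrow> J = J'"
    by (meson finite_has_maximal2)
  then show thesis
    by (intro that) (auto simp: max_int_interval_def)
qed

lemma label_ext_swap: "label_ext ext k (prod.swap l) = label_ext ext k l"
  by (auto simp: label_ext_def)

locale interval_extension =
  fixes A :: "'k \<Rightarrow> int set"
    and RI :: "'t \<Rightarrow> int set"
    and ext :: "'t \<Rightarrow> 'k \<Rightarrow> 't set"
  assumes RI_int: "\<And>t. int_interval (RI t)"
    and ext_max: "\<And>t k t'. t' \<in> ext t k \<Longrightarrow> max_int_interval (RI t') (RI t \<inter> A k)"
    and ext_all: "\<And>t k J. max_int_interval J (RI t \<inter> A k) \<Longrightarrow> \<exists>t'\<in>ext t k. RI t' = J"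
begin

lemma finite_RI: "finite (RI t)"
  using RI_int[of t] by (auto simp: int_interval_def)

lemma ext_mono:
  assumes "RI t \<subseteq> RI s" "t' \<in> ext t k"
  obtains s' where "s' \<in> ext s k" "RI t' \<subseteq> RI s'"
proof -
  have "RI t' \<subseteq> RI s \<inter> A k"
    using ext_max[OF assms(2)] assms(1) by (auto simp: max_int_interval_def)
  moreover have "finite (RI s \<inter> A k)"
    using finite_RI by blast
  ultimately obtain J where "max_int_interval J (RI s \<inter> A k)" "RI t' \<subseteq> J"
    using max_int_interval_exists[OF _ RI_int] by blast
  then show thesis
    using ext_all that by blast
qed

lemma label_ext_mono:
  assumes "RI (fst lj) \<subseteq> RI (fst li)" "RI (snd lj) \<subseteq> RI (snd li)"
    and "l \<in> label_ext ext k lj"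
  obtains l' where "l' \<in> label_ext ext k li"
    "RI (fst l) \<subseteq> RI (fst l')" "RI (snd l) \<subseteq> RI (snd l')"
proof -
  from \<open>l \<in> label_ext ext k lj\<close> consider
      t where "l = (t, snd lj)" "t \<in> ext (fst lj) k"
    | t where "l = (t, fst lj)" "t \<in> ext (snd lj) k"
    by (auto simp: label_ext_def)
  then show thesis
  proof cases
    case (1 t)
    then obtain s where s: "s \<in> ext (fst li) k" "RI t \<subseteq> RI s"
      using ext_mono[OF assms(1)] by blast
    show thesis
    proof (rule that)
      show "(s, snd li) \<in> label_ext ext k li"
        using s(1) by (auto simp: label_ext_def)
    qed (use 1(1) s(2) assms(2) in auto)
  next
    case (2 t)
    then obtain s where s: "s \<in> ext (snd li) k" "RI t \<subseteq> RI s"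
      using ext_mono[OF assms(2)] by blast
    show thesis
    proof (rule that)
      show "(s, fst li) \<in> label_ext ext k li"
        using s(1) by (auto simp: label_ext_def)
    qed (use 2(1) s(2) assms(1) in auto)
  qed
qed

end

theorem proposition6:
  fixes A :: "'k \<Rightarrow> int set"
    and RI :: "'t \<Rightarrow> int set"
    and ext :: "'t \<Rightarrow> 'k \<Rightarrow> 't set"
    and cost :: "'t \<times> 't \<Rightarrow> real"
    and k :: 'k
    and li lj :: "'t \<times> 't"
  assumes RI_int: "\<And>t. int_interval (RI t)"
    and ext_max: "\<And>t k' t'. t' \<in> ext t k' \<Longrightarrow> max_int_interval (RI t') (RI t \<inter> A k')"
    and ext_all: "\<And>t k' J. max_int_interval J (RI t \<inter> A k') \<Longrightarrow> \<exists>t'\<in>ext t k'. RI t' = J"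
    and cost_mono: "\<And>l1 l2. cost l1 \<le> cost l2 \<Longrightarrow>
        (\<forall>l'\<in>label_ext ext k l1. \<forall>l\<in>label_ext ext k l2. cost l' \<le> cost l)"
    and dom: "prec_eq RI cost li lj"
  shows "\<forall>l\<in>label_ext ext k lj. \<exists>l'\<in>label_ext ext k li. prec_ne RI cost l' l"
proof
  interpret interval_extension A RI ext
    using RI_int ext_max ext_all by unfold_locales
  fix l assume l: "l \<in> label_ext ext k lj"
  obtain li' where li': "label_ext ext k li' = label_ext ext k li"
    "RI (fst lj) \<subseteq> RI (fst li')" "RI (snd lj) \<subseteq> RI (snd li')"
  proof (cases "RI (fst lj) \<subseteq> RI (fst li) \<and> RI (snd lj) \<subseteq> RI (snd li)")
    case True
    then show thesis
      using that[of li] by blast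
  next
    case False
    with dom show thesis
      by (intro that[of "prod.swap li"]) (auto simp: prec_eq_def label_ext_swap)
  qed
  obtain l' where l': "l' \<in> label_ext ext k li'"
    "RI (fst l) \<subseteq> RI (fst l')" "RI (snd l) \<subseteq> RI (snd l')"
    by (rule label_ext_mono[OF li'(2,3) l])
  have "cost li \<le> cost lj"
    using dom by (simp add: prec_eq_def)
  then have "cost l' \<le> cost l"
    using cost_mono l l'(1) unfolding li'(1) by blast
  then show "\<exists>l'\<in>label_ext ext k li. prec_ne RI cost l' l"
    using l' unfolding li'(1) prec_ne_def by blast
qed

end
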